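(* Let $\mathbf W\succ0$ be symmetric $n\times n$ and $\mathbf S\sim\mathcal D$ a random matrix in $\mathbb{R}^{n\times\tau}$. For any $\mathbf M,\mathbf N\in\mathbb{R}^{d\times n}$ and any realization of $\mathbf S$, $$\|\mathbf M(\mathbf I-\Pi_{\mathbf S})+\mathbf N\Pi_{\mathbf S}\|_{\mathbf W^{-1}}^2=\|\mathbf M(\mathbf I-\Pi_{\mathbf S})\|_{\mathbf W^{-1}}^2+\|\mathbf N\Pi_{\mathbf S}\|_{\mathbf W^{-1}}^2,$$ and $\mathbb{E}_{\mathcal D}\|\mathbf N\Pi_{\mathbf S}\|_{\mathbf W^{-1}}^2=\|\mathbf N\|^2_{\mathbb{E}_{\mathcal D}[\mathbf H_{\mathbf S}]}$. Furthermore, $$\mathbb{E}_{\mathcal D}\|\mathbf M(\mathbf I-\Pi_{\mathbf S})+\mathbf N\Pi_{\mathbf S}\|_{\mathbf W^{-1}}^2\le(1-\kappa)\|\mathbf M\|_{\mathbf W^{-1}}^2+\|\mathbf N\|^2_{\mathbb{E}_{\mathcal D}[\mathbf H_{\mathbf S}]}.$$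
   Context: $\Pi_{\mathbf S}=\mathbf S(\mathbf S^\top\mathbf W\mathbf S)^\dagger\mathbf S^\top\mathbf W$, $\mathbf H_{\mathbf S}=\mathbf S(\mathbf S^\top\mathbf W\mathbf S)^\dagger\mathbf S^\top$. For a symmetric positive semidefinite $\mathbf B$, $\|\mathbf X\|_{\mathbf B}^2=\mathrm{Tr}(\mathbf X\mathbf B\mathbf X^\top)$; in particular $\|\mathbf X\|_{\mathbf W^{-1}}^2=\mathrm{Tr}(\mathbf X\mathbf W^{-1}\mathbf X^\top)$. $\kappa=\lambda_{\min}(\mathbb{E}_{\mathcal D}[\Pi_{\mathbf S}])$ (equivalently $\lambda_{\min}(\mathbf W^{1/2}\mathbb{E}[\mathbf H_{\mathbf S}]\mathbf W^{1/2})$). *)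

theory Defs
  imports "HOL-Analysis.Analysis" "HOL-Probability.Probability"
begin

definition sym_pos_def :: "real^'n^'n \<Rightarrow> bool" where
  "sym_pos_def W \<longleftrightarrow> transpose W = W \<and> (\<forall>x. x \<noteq> 0 \<longrightarrow> x \<bullet> (W *v x) > 0)"

definition is_pinv :: "real^'n^'m \<Rightarrow> real^'m^'n \<Rightarrow> bool" where
  "is_pinv A X \<longleftrightarrow> A ** X ** A = A \<and> X ** A ** X = X
     \<and> transpose (A ** X) = A ** X \<and> transpose (X ** A) = X ** A"

definition pinv :: "real^'n^'m \<Rightarrow> real^'m^'n" where
  "pinv A = (THE X. is_pinv A X)"

definition Hmat :: "real^'n^'n \<Rightarrow> real^'t^'n \<Rightarrow> real^'n^'n" where
  "Hmat W S = S ** pinv (transpose S ** W ** S) ** transpose S"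

definition Pimat :: "real^'n^'n \<Rightarrow> real^'t^'n \<Rightarrow> real^'n^'n" where
  "Pimat W S = S ** pinv (transpose S ** W ** S) ** transpose S ** W"

definition wnormsq :: "real^'n^'n \<Rightarrow> real^'n^'d \<Rightarrow> real" where
  "wnormsq B X = trace (X ** B ** transpose X)"

definition lambda_min :: "real^'n^'n \<Rightarrow> real" where
  "lambda_min A = Min {c. \<exists>v. v \<noteq> 0 \<and> A *v v = c *\<^sub>R v}"

definition kappa :: "real^'n^'n \<Rightarrow> (real^'t^'n) measure \<Rightarrow> real" where
  "kappa W D = lambda_min (\<integral>S. Pimat W S \<partial>D)"

end

theory Submission
  imports Defs
begin

text \<open>Write Pi = H W with H = H_S. As H is symmetric with H W H = H (a Penrose identity of the
  pseudoinverse), Pi W^-1 Pi^T = H, (I - Pi) W^-1 Pi^T = 0 and (I - Pi) W^-1 (I - Pi)^T = W^-1 - H.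
  So the two summands are W^-1-orthogonal, ||N Pi||^2 = ||N||_H^2 and
  ||M (I - Pi)||^2 = ||M||^2 - ||M||_H^2 (unindexed norms taken in W^-1). The right-hand sides are
  linear in H, and H is integrable because 0 <= H <= W^-1 in the Loewner order, so taking
  expectations replaces H by E[H]. Finally ||M||_E[H]^2 >= lambda_min(E[H] W) ||M||^2, since the
  minimum of the generalized Rayleigh quotient of W E[H] W relative to W is an eigenvalue
  of E[H] W.\<close>

lemma matrix_add_rdistrib: "((A::'a::semiring_1^'n^'m) + B) ** C = A ** C + B ** C"
  by (vector matrix_matrix_mult_def sum.distrib[symmetric] field_simps)

lemma matrix_diff_rdistrib: "((A::'a::ring_1^'n^'m) - B) ** C = A ** C - B ** C"
  by (vector matrix_matrix_mult_def sum_subtractf[symmetric] field_simps)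

lemma matrix_diff_ldistrib: "(A::'a::ring_1^'n^'m) ** (B - C) = A ** B - A ** C"
  by (vector matrix_matrix_mult_def sum_subtractf[symmetric] field_simps)

lemma transpose_add: "transpose ((A::'a::plus^'n^'m) + B) = transpose A + transpose B"
  by (vector transpose_def)

lemma transpose_diff: "transpose ((A::'a::minus^'n^'m) - B) = transpose A - transpose B"
  by (vector transpose_def)

lemma bounded_linear_matrix_mult_right: "bounded_linear (\<lambda>A::real^'n^'m. A ** B)"
  by (simp add: linear_conv_bounded_linear[symmetric] linearI matrix_add_rdistrib scalar_matrix_assoc)

lemma bounded_linear_transpose: "bounded_linear (transpose :: real^'n^'m \<Rightarrow> _)"
  by (simp add: linear_conv_bounded_linear[symmetric] linearI transpose_add transpose_scalar)

lemma matrix_entry_inner: "(A::real^'n^'m) $ i $ j = axis i 1 \<bullet> (A *v axis j 1)"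
  by (simp add: matrix_vector_mult_basis column_def inner_commute[of "axis i 1"] inner_axis)

lemma inner_transpose_matrix: "x \<bullet> ((C::real^'n^'m) *v y) = (transpose C *v x) \<bullet> y"
  by (simp add: dot_lmul_matrix)

lemma symmetric_matrix_inner:
  fixes A :: "real^'n^'n"
  assumes "transpose A = A"
  shows "(A *v x) \<bullet> y = x \<bullet> (A *v y)"
  by (metis assms inner_transpose_matrix)

lemma symmetric_matrix_if_inner:
  fixes C :: "real^'n^'n"
  assumes "\<And>x y. (C *v x) \<bullet> y = x \<bullet> (C *v y)"
  shows "transpose C = C"
proof -
  have "(transpose C *v x) \<bullet> y = (C *v x) \<bullet> y" for x y
    by (simp only: inner_transpose_matrix[symmetric] assms)
  then have "(transpose C *v x - C *v x) \<bullet> y = 0" for x y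
    by (simp add: inner_diff_left)
  then have "transpose C *v x = C *v x" for x
    by (metis inner_eq_zero_iff right_minus_eq)
  then show ?thesis by (simp add: matrix_eq)
qed

section \<open>The pseudoinverse of a symmetric matrix\<close>

lemma is_pinv_unique:
  fixes A :: "real^'n^'m"
  assumes X: "is_pinv A X" and Y: "is_pinv A Y"
  shows "X = Y"
proof -
  have x1: "A ** X ** A = A" and x2: "X ** A ** X = X" and x3: "transpose (A ** X) = A ** X"
    and x4: "transpose (X ** A) = X ** A" using X by (auto simp: is_pinv_def)
  have y1: "A ** Y ** A = A" and y2: "Y ** A ** Y = Y" and y3: "transpose (A ** Y) = A ** Y"
    and y4: "transpose (Y ** A) = Y ** A" using Y by (auto simp: is_pinv_def)
  have "X = X ** transpose (A ** X)" using x2 x3 by (simp add: matrix_mul_assoc)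
  also have "\<dots> = X ** transpose (A ** Y ** A ** X)" using y1 by simp
  also have "\<dots> = X ** A ** X ** A ** Y"
    using x3 y3 by (simp add: matrix_transpose_mul matrix_mul_assoc)
  also have "\<dots> = X ** A ** Y" using x2 by simp
  finally have XAY: "X = X ** A ** Y" .
  have "Y = transpose (Y ** A) ** Y" using y2 y4 by simp
  also have "\<dots> = transpose (Y ** A ** X ** A) ** Y" by (metis x1 matrix_mul_assoc)
  also have "\<dots> = X ** A ** Y ** A ** Y"
    using x4 y4 by (simp add: matrix_transpose_mul matrix_mul_assoc)
  also have "\<dots> = X ** A ** Y" by (metis y2 matrix_mul_assoc)
  finally show ?thesis using XAY by simp
qed

lemma pinv_eq: "is_pinv (A::real^'n^'m) X \<Longrightarrow> pinv A = X"
  unfolding pinv_def by (blast intro: the_equality is_pinv_unique)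

lemma is_pinv_transpose:
  fixes A :: "real^'n^'m"
  assumes "is_pinv A X"
  shows "is_pinv (transpose A) (transpose X)"
proof -
  have "transpose A ** transpose X ** transpose A = transpose (A ** X ** A)"
    and "transpose X ** transpose A ** transpose X = transpose (X ** A ** X)"
    and "transpose A ** transpose X = transpose (X ** A)"
    and "transpose X ** transpose A = transpose (A ** X)"
    by (simp_all add: matrix_transpose_mul matrix_mul_assoc)
  with assms show ?thesis
    unfolding is_pinv_def by simp
qed

lemma symmetric_matrix_orthogonal_decomp:
  fixes A :: "real^'n^'n"
  assumes "transpose A = A"
  obtains r k where "z = r + k" "r \<in> range ((*v) A)" "A *v k = 0"
proof -
  define R where "R = range ((*v) A)"
  have "subspace R"
    unfolding R_def by (rule linear_subspace_image) (simp_all add: subspace_UNIV)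
  obtain r k where r: "r \<in> span R" and k: "\<And>w. w \<in> span R \<Longrightarrow> orthogonal k w" and z: "z = r + k"
    using orthogonal_subspace_decomp_exists[of R z] by blast
  have "r \<in> R" using r \<open>subspace R\<close> by (metis span_eq_iff)
  have k_orth: "k \<bullet> (A *v u) = 0" for u
    using k[of "A *v u"] by (simp add: R_def span_base orthogonal_def)
  have "(A *v k) \<bullet> (A *v k) = 0"
    using k_orth[of "A *v k"] by (simp add: symmetric_matrix_inner[OF assms])
  then show ?thesis
    using that z \<open>r \<in> R\<close> by (simp add: R_def)
qed

lemma symmetric_matrix_inverse_on_range:
  fixes A :: "real^'n^'n"
  assumes symA: "transpose A = A"
  obtains g where "linear g" "\<And>z. g z \<in> range ((*v) A)"
    "\<And>r. r \<in> range ((*v) A) \<Longrightarrow> g (A *v r) = r"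
    "\<And>r. r \<in> range ((*v) A) \<Longrightarrow> A *v g r = r"
proof -
  define R where "R = range ((*v) A)"
  have "subspace R"
    unfolding R_def by (rule linear_subspace_image) (simp_all add: subspace_UNIV)
  moreover have "inj_on ((*v) A) R"
  proof (rule inj_onI)
    fix r s assume "r \<in> R" "s \<in> R" "A *v r = A *v s"
    then obtain a b where "r - s = A *v (a - b)" and "A *v (r - s) = 0"
      by (auto simp: R_def matrix_vector_mult_diff_distrib)
    then have "(r - s) \<bullet> (r - s) = 0"
      by (metis inner_zero_right symmetric_matrix_inner[OF symA])
    then show "r = s" by simp
  qed
  ultimately obtain g where lin_g: "linear g" and g_R: "\<And>z. g z \<in> R"
    and g_A: "\<And>r. r \<in> R \<Longrightarrow> g (A *v r) = r"
    using linear_exists_left_inverse_on[of "(*v) A" R] by (auto simp: image_subset_iff)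
  have "A *v g r = r" if "r \<in> R" for r
  proof -
    obtain u where u: "r = A *v u"
      using \<open>r \<in> R\<close> by (auto simp: R_def)
    obtain r' k where "u = r' + k" "r' \<in> R" "A *v k = 0"
      using symmetric_matrix_orthogonal_decomp[OF symA] unfolding R_def by metis
    then show ?thesis
      using g_A u by (simp add: matrix_vector_right_distrib)
  qed
  with lin_g g_R g_A show thesis
    using that unfolding R_def by blast
qed

text \<open>If g inverts A on its range R, then Q z = g (A z) is the orthogonal projection onto R
  (ker A is orthogonal to R), and z \<mapsto> g (Q z) is the pseudoinverse.\<close>

lemma is_pinv_exists_symmetric:
  fixes A :: "real^'n^'n"
  assumes symA: "transpose A = A"
  shows "\<exists>X. is_pinv A X"
proof -
  define R where "R = range ((*v) A)"
  obtain g where lin_g: "linear g" and g_R: "\<And>z. g z \<in> R"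
    and g_A: "\<And>r. r \<in> R \<Longrightarrow> g (A *v r) = r" and A_g: "\<And>r. r \<in> R \<Longrightarrow> A *v g r = r"
    using symmetric_matrix_inverse_on_range[OF symA] unfolding R_def by metis
  define Q where "Q z = g (A *v z)" for z
  have Q_R: "Q r = r" if "r \<in> R" for r
    using that g_A by (auto simp: Q_def R_def)
  have orth_R: "(z - Q z) \<bullet> r = 0" if "r \<in> R" for z r
  proof -
    obtain u where "r = A *v u"
      using \<open>r \<in> R\<close> by (auto simp: R_def)
    moreover have "A *v (z - Q z) = 0"
      using A_g[of "A *v z"] by (simp add: Q_def R_def matrix_vector_mult_diff_distrib)
    ultimately show ?thesis
      by (metis inner_zero_left symmetric_matrix_inner[OF symA])
  qed
  have Q_sym: "Q x \<bullet> y = x \<bullet> Q y" for x y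
  proof -
    have "(y - Q y) \<bullet> Q x = 0" "(x - Q x) \<bullet> Q y = 0"
      using orth_R g_R by (simp_all add: Q_def)
    then have "y \<bullet> Q x = Q y \<bullet> Q x" "x \<bullet> Q y = Q x \<bullet> Q y"
      by (simp_all add: inner_diff_left)
    then show ?thesis
      by (metis inner_commute)
  qed
  define X where "X = matrix (\<lambda>z. g (g (A *v z)))"
  have "linear (\<lambda>z. g (g (A *v z)))"
    using linear_compose[OF matrix_vector_mul_linear linear_compose[OF lin_g lin_g]] by (simp add: o_def)
  then have X_apply: "X *v z = g (Q z)" for z
    unfolding X_def Q_def by (simp add: matrix_works)
  have AX: "A *v (X *v z) = Q z" for z
    using A_g g_R by (simp add: X_apply Q_def)
  have XA: "X *v (A *v z) = Q z" for z
    using Q_R by (simp add: X_apply R_def Q_def)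
  have "A ** X ** A = A"
    using Q_R by (simp add: matrix_eq AX R_def flip: matrix_vector_mul_assoc)
  moreover have "X ** A ** X = X"
    using Q_R g_R by (simp add: matrix_eq XA flip: matrix_vector_mul_assoc) (simp add: X_apply)
  moreover have "transpose (A ** X) = A ** X" "transpose (X ** A) = X ** A"
    by (simp_all add: symmetric_matrix_if_inner AX XA Q_sym flip: matrix_vector_mul_assoc)
  ultimately show ?thesis
    unfolding is_pinv_def by blast
qed

lemma pinv_symmetric:
  fixes A :: "real^'n^'n"
  assumes "transpose A = A"
  shows "is_pinv A (pinv A)" "transpose (pinv A) = pinv A"
proof -
  obtain X where X: "is_pinv A X" using is_pinv_exists_symmetric[OF assms] by blast
  then show "is_pinv A (pinv A)" by (simp add: pinv_eq)
  show "transpose (pinv A) = pinv A"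
    using is_pinv_transpose[OF X] X assms by (metis is_pinv_unique pinv_eq)
qed

section \<open>Positive semidefinite matrices\<close>

definition psd_matrix :: "real^'n^'n \<Rightarrow> bool" where
  "psd_matrix A \<longleftrightarrow> transpose A = A \<and> (\<forall>x. 0 \<le> x \<bullet> (A *v x))"

lemma sym_pos_def_imp_psd_matrix: "sym_pos_def W \<Longrightarrow> psd_matrix W"
  unfolding sym_pos_def_def psd_matrix_def by (metis inner_zero_left order.refl less_imp_le)

lemma sym_pos_def_matrix_inv:
  fixes W :: "real^'n^'n"
  assumes "sym_pos_def W"
  shows "W ** matrix_inv W = mat 1" "matrix_inv W ** W = mat 1"
proof -
  have "\<forall>x. W *v x = 0 \<longrightarrow> x = 0"
    using assms by (force simp: sym_pos_def_def)
  then have "invertible W"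
    by (simp add: matrix_left_invertible_ker invertible_left_inverse)
  then have "W ** matrix_inv W = mat 1 \<and> matrix_inv W ** W = mat 1"
    unfolding invertible_def matrix_inv_def by (rule someI_ex)
  then show "W ** matrix_inv W = mat 1" "matrix_inv W ** W = mat 1" by auto
qed

lemma psd_matrix_congruence:
  fixes B :: "real^'n^'n" and C :: "real^'n^'m"
  assumes "psd_matrix B"
  shows "psd_matrix (C ** B ** transpose C)"
proof -
  have "x \<bullet> ((C ** B ** transpose C) *v x) = (transpose C *v x) \<bullet> (B *v (transpose C *v x))" for x
    by (simp add: inner_transpose_matrix[of x] matrix_vector_mul_assoc[symmetric])
  then show ?thesis
    using assms by (simp add: psd_matrix_def matrix_transpose_mul matrix_mul_assoc)
qed

lemma symmetric_quadratic_form_add: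
  fixes A :: "real^'n^'n"
  assumes "transpose A = A"
  shows "(x + t *\<^sub>R h) \<bullet> (A *v (x + t *\<^sub>R h))
    = x \<bullet> (A *v x) + 2 * t * (h \<bullet> (A *v x)) + t\<^sup>2 * (h \<bullet> (A *v h))"
proof -
  have "x \<bullet> (A *v h) = h \<bullet> (A *v x)"
    using symmetric_matrix_inner[OF assms, of h x] by (simp add: inner_commute)
  then show ?thesis
    by (simp add: matrix_vector_right_distrib matrix_vector_mult_scaleR inner_add_left
        inner_add_right power2_eq_square algebra_simps)
qed

lemma nonneg_quadratic_linear_coeff_eq_0:
  fixes a b :: real
  assumes "\<And>t. 0 \<le> 2 * t * a + t\<^sup>2 * b"
  shows "a = 0"
proof -
  define s where "s = \<bar>b\<bar> + 1"
  have s: "s > 0" "b - 2 * s < 0" by (auto simp: s_def)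
  have "0 \<le> s\<^sup>2 * (2 * (- a / s) * a + (- a / s)\<^sup>2 * b)"
    using assms[of "- a / s"] by simp
  also have "\<dots> = a\<^sup>2 * (b - 2 * s)"
    using s by (simp add: field_simps power2_eq_square)
  finally have "a\<^sup>2 * (b - 2 * s) \<ge> 0" .
  with s(2) have "a\<^sup>2 \<le> 0"
    by (simp add: zero_le_mult_iff)
  then show ?thesis by simp
qed

lemma psd_matrix_quadratic_form_eq_0:
  fixes A :: "real^'n^'n"
  assumes "psd_matrix A" and "x \<bullet> (A *v x) = 0"
  shows "A *v x = 0"
proof -
  have "h \<bullet> (A *v x) = 0" for h
  proof (rule nonneg_quadratic_linear_coeff_eq_0)
    fix t
    have "0 \<le> (x + t *\<^sub>R h) \<bullet> (A *v (x + t *\<^sub>R h))"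
      using assms(1) by (simp add: psd_matrix_def)
    then show "0 \<le> 2 * t * (h \<bullet> (A *v x)) + t\<^sup>2 * (h \<bullet> (A *v h))"
      using assms symmetric_quadratic_form_add[of A x t h] by (simp add: psd_matrix_def)
  qed
  from this[of "A *v x"] show ?thesis by simp
qed

lemma psd_matrix_diag_nonneg: "psd_matrix A \<Longrightarrow> 0 \<le> A $ i $ i"
  by (simp add: psd_matrix_def matrix_entry_inner)

lemma psd_matrix_entry_le:
  fixes A :: "real^'n^'n"
  assumes "psd_matrix A"
  shows "2 * \<bar>A $ i $ j\<bar> \<le> A $ i $ i + A $ j $ j"
proof -
  have "transpose A = A" "\<And>x. 0 \<le> x \<bullet> (A *v x)"
    using assms by (simp_all add: psd_matrix_def)
  then have "0 \<le> A $ j $ j + 2 * t * A $ i $ j + t\<^sup>2 * A $ i $ i" for t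
    by (metis matrix_entry_inner symmetric_quadratic_form_add)
  from this[of 1] this[of "-1"] show ?thesis
    by (simp add: abs_le_iff)
qed

lemma norm_matrix_le_sum_abs: "norm (A::real^'n^'m) \<le> (\<Sum>i\<in>UNIV. \<Sum>j\<in>UNIV. \<bar>A $ i $ j\<bar>)"
proof -
  have "norm A \<le> (\<Sum>i\<in>UNIV. norm (A $ i))"
    by (simp add: norm_vec_def L2_set_le_sum)
  also have "\<dots> \<le> (\<Sum>i\<in>UNIV. \<Sum>j\<in>UNIV. \<bar>A $ i $ j\<bar>)"
    by (intro sum_mono norm_le_l1_cart)
  finally show ?thesis .
qed

lemma norm_psd_matrix_le_trace:
  fixes A :: "real^'n^'n"
  assumes "psd_matrix A"
  shows "norm A \<le> CARD('n)\<^sup>2 * trace A"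
proof -
  have diag_le: "A $ i $ i \<le> trace A" for i
    unfolding trace_def using psd_matrix_diag_nonneg[OF assms]
    by (intro member_le_sum) auto
  have "\<bar>A $ i $ j\<bar> \<le> trace A" for i j
    using psd_matrix_entry_le[OF assms, of i j] diag_le[of i] diag_le[of j] by linarith
  then have "(\<Sum>i\<in>UNIV. \<Sum>j\<in>UNIV. \<bar>A $ i $ j\<bar>) \<le> (\<Sum>i::'n\<in>UNIV. \<Sum>j::'n\<in>UNIV. trace A)"
    by (meson sum_mono)
  also have "\<dots> = CARD('n)\<^sup>2 * trace A"
    by (simp add: power2_eq_square)
  finally show ?thesis
    using norm_matrix_le_sum_abs[of A] by linarith
qed

lemma psd_matrix_trace_nonneg: "psd_matrix A \<Longrightarrow> 0 \<le> trace A"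
  unfolding trace_def by (simp add: psd_matrix_diag_nonneg sum_nonneg)

section \<open>Weighted norms and the projection\<close>

lemma wnormsq_eq_sum_rows: "wnormsq B (X::real^'n^'d) = (\<Sum>k\<in>UNIV. X $ k \<bullet> (B *v X $ k))"
  unfolding wnormsq_def trace_def
  by (simp add: matrix_matrix_mult_def transpose_def inner_vec_def matrix_vector_mult_def
      sum_distrib_left sum_distrib_right mult.assoc mult.left_commute)
    (rule sum.cong[OF refl], rule sum.swap)

lemma wnormsq_mult_right: "wnormsq B (X ** C) = wnormsq (C ** B ** transpose C) X"
  by (simp add: wnormsq_def matrix_transpose_mul matrix_mul_assoc)

lemma wnormsq_add_orthogonal:
  assumes "transpose B = B" and "X ** B ** transpose Y = 0"
  shows "wnormsq B (X + Y) = wnormsq B X + wnormsq B Y"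
proof -
  have "Y ** B ** transpose X = transpose (X ** B ** transpose Y)"
    using assms(1) by (simp add: matrix_transpose_mul matrix_mul_assoc)
  with assms(2) have "Y ** B ** transpose X = 0"
    by (simp add: transpose_def zero_vec_def)
  with assms(2) show ?thesis
    by (simp add: wnormsq_def transpose_add matrix_add_ldistrib matrix_add_rdistrib trace_add)
qed

lemma wnormsq_diff_weight: "wnormsq (A - B) X = wnormsq A X - wnormsq B X"
  by (simp add: wnormsq_def matrix_diff_ldistrib matrix_diff_rdistrib trace_sub)

lemma bounded_linear_wnormsq_weight: "bounded_linear (\<lambda>B::real^'n^'n. wnormsq B (X::real^'n^'d))"
proof -
  have "trace (c *\<^sub>R A) = c * trace A" for c and A :: "real^'d^'d"
    by (simp add: trace_def sum_distrib_left)
  then show ?thesis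
    by (simp add: linear_conv_bounded_linear[symmetric] linearI wnormsq_def matrix_add_ldistrib
        matrix_add_rdistrib trace_add matrix_scalar_ac scalar_matrix_assoc[symmetric])
qed

text \<open>Models Pi_S = H_S W with Wi = W^-1; H W H = H comes from the Penrose identity
  X A X = X of the pseudoinverse.\<close>

locale weighted_projection =
  fixes W Wi H :: "real^'n^'n"
  assumes symmetric_W: "transpose W = W"
    and W_Wi: "W ** Wi = mat 1" and Wi_W: "Wi ** W = mat 1"
    and symmetric_H: "transpose H = H" and H_W_H: "H ** W ** H = H"
begin

lemma symmetric_Wi: "transpose Wi = Wi"
proof -
  have "transpose Wi ** W = mat 1"
    using arg_cong[OF W_Wi, of transpose] by (simp add: matrix_transpose_mul symmetric_W)
  then have "transpose Wi ** (W ** Wi) = Wi"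
    by (simp add: matrix_mul_assoc)
  then show ?thesis
    by (simp add: W_Wi)
qed

lemma transpose_projection: "transpose (H ** W) = W ** H"
  by (simp add: matrix_transpose_mul symmetric_W symmetric_H)

lemma projection_congruence: "(H ** W) ** Wi ** transpose (H ** W) = H"
proof -
  have "(H ** W) ** Wi ** transpose (H ** W) = H ** (W ** Wi) ** W ** H"
    by (simp add: transpose_projection matrix_mul_assoc)
  then show ?thesis
    by (simp add: W_Wi H_W_H)
qed

lemma projection_orthogonal: "(mat 1 - H ** W) ** Wi ** transpose (H ** W) = 0"
proof -
  have "Wi ** transpose (H ** W) = H"
    by (simp add: transpose_projection matrix_mul_assoc Wi_W)
  with H_W_H show ?thesis
    by (simp add: matrix_diff_rdistrib matrix_mul_assoc[symmetric])
qed

lemma complement_congruence: "(mat 1 - H ** W) ** Wi ** transpose (mat 1 - H ** W) = Wi - H"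
proof -
  have "(mat 1 - H ** W) ** Wi = Wi - H"
    by (simp add: matrix_diff_rdistrib matrix_mul_assoc[symmetric] W_Wi)
  with projection_orthogonal show ?thesis
    by (simp add: transpose_diff matrix_diff_ldistrib)
qed

lemma wnormsq_pythagoras:
  "wnormsq Wi (M ** (mat 1 - H ** W) + N ** (H ** W))
    = wnormsq Wi (M ** (mat 1 - H ** W)) + wnormsq Wi (N ** (H ** W))"
proof (rule wnormsq_add_orthogonal[OF symmetric_Wi])
  show "M ** (mat 1 - H ** W) ** Wi ** transpose (N ** (H ** W)) = 0"
    using projection_orthogonal
    by (simp add: matrix_transpose_mul matrix_mul_assoc) (simp flip: matrix_mul_assoc)
qed

lemma wnormsq_projection: "wnormsq Wi (N ** (H ** W)) = wnormsq H N"
  by (simp add: wnormsq_mult_right projection_congruence)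

lemma wnormsq_complement: "wnormsq Wi (M ** (mat 1 - H ** W)) = wnormsq Wi M - wnormsq H M"
  by (simp add: wnormsq_mult_right complement_congruence wnormsq_diff_weight)

lemma psd_matrix_projection_weight:
  assumes "psd_matrix W"
  shows "psd_matrix H" "psd_matrix (Wi - H)"
proof -
  have "psd_matrix (Wi ** W ** transpose Wi)"
    using assms by (rule psd_matrix_congruence)
  then have "psd_matrix Wi"
    by (simp add: symmetric_Wi Wi_W)
  then show "psd_matrix H" "psd_matrix (Wi - H)"
    using psd_matrix_congruence projection_congruence complement_congruence by metis+
qed

end

lemma Pimat_eq_Hmat_mult: "Pimat W S = Hmat W S ** W"
  by (simp add: Pimat_def Hmat_def)

lemma weighted_projection_Hmat:
  fixes W :: "real^'n^'n" and S :: "real^'t^'n"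
  assumes "sym_pos_def W"
  shows "weighted_projection W (matrix_inv W) (Hmat W S)"
proof
  show symW: "transpose W = W"
    using assms by (simp add: sym_pos_def_def)
  show "W ** matrix_inv W = mat 1" "matrix_inv W ** W = mat 1"
    using sym_pos_def_matrix_inv[OF assms] by auto
  define A where "A = transpose S ** W ** S"
  have "transpose A = A"
    by (simp add: A_def matrix_transpose_mul symW matrix_mul_assoc)
  note pinv_A = pinv_symmetric[OF this]
  have H: "Hmat W S = S ** pinv A ** transpose S"
    by (simp add: Hmat_def A_def)
  show "transpose (Hmat W S) = Hmat W S"
    unfolding H using pinv_A(2) by (simp add: matrix_transpose_mul matrix_mul_assoc)
  have "Hmat W S ** W ** Hmat W S = S ** (pinv A ** A ** pinv A) ** transpose S"
    unfolding H A_def by (simp add: matrix_mul_assoc)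
  also have "\<dots> = Hmat W S"
    using pinv_A(1) by (simp add: is_pinv_def H)
  finally show "Hmat W S ** W ** Hmat W S = Hmat W S" .
qed

lemma wnormsq_Pimat_pythagoras:
  "sym_pos_def W \<Longrightarrow> wnormsq (matrix_inv W) (M ** (mat 1 - Pimat W S) + N ** Pimat W S)
    = wnormsq (matrix_inv W) (M ** (mat 1 - Pimat W S)) + wnormsq (matrix_inv W) (N ** Pimat W S)"
  unfolding Pimat_eq_Hmat_mult
  by (rule weighted_projection.wnormsq_pythagoras[OF weighted_projection_Hmat])

lemma wnormsq_Pimat: "sym_pos_def W \<Longrightarrow> wnormsq (matrix_inv W) (N ** Pimat W S) = wnormsq (Hmat W S) N"
  unfolding Pimat_eq_Hmat_mult
  by (rule weighted_projection.wnormsq_projection[OF weighted_projection_Hmat])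

lemma wnormsq_complement_Pimat:
  "sym_pos_def W \<Longrightarrow> wnormsq (matrix_inv W) (M ** (mat 1 - Pimat W S))
    = wnormsq (matrix_inv W) M - wnormsq (Hmat W S) M"
  unfolding Pimat_eq_Hmat_mult
  by (rule weighted_projection.wnormsq_complement[OF weighted_projection_Hmat])

section \<open>Generalized eigenvalues\<close>

lemma eigenvectors_mult_orthogonal:
  fixes G W :: "real^'n^'n"
  assumes "transpose W = W" "transpose G = G"
    and u: "(G ** W) *v u = a *\<^sub>R u" and v: "(G ** W) *v v = b *\<^sub>R v" and "a \<noteq> b"
  shows "u \<bullet> (W *v v) = 0"
proof -
  have "b * (u \<bullet> (W *v v)) = (W *v u) \<bullet> (G *v (W *v v))"
    using v symmetric_matrix_inner[OF assms(1)] by (simp add: matrix_vector_mul_assoc)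
  also have "\<dots> = (G *v (W *v u)) \<bullet> (W *v v)"
    by (simp add: symmetric_matrix_inner[OF assms(2)])
  also have "\<dots> = a * (u \<bullet> (W *v v))"
    using u by (simp add: matrix_vector_mul_assoc)
  finally show ?thesis
    using \<open>a \<noteq> b\<close> by simp
qed

text \<open>Eigenvectors of G W for distinct eigenvalues are W-orthogonal, hence independent.\<close>

lemma finite_eigenvalues_mult_pos_def:
  fixes G W :: "real^'n^'n"
  assumes W: "sym_pos_def W" and symG: "transpose G = G"
  shows "finite {c. \<exists>v. v \<noteq> 0 \<and> (G ** W) *v v = c *\<^sub>R v}" (is "finite ?E")
proof -
  have symW: "transpose W = W" and pd: "\<And>x. x \<noteq> 0 \<Longrightarrow> 0 < x \<bullet> (W *v x)"
    using W by (simp_all add: sym_pos_def_def)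
  define e where "e c = (SOME v. v \<noteq> 0 \<and> (G ** W) *v v = c *\<^sub>R v)" for c
  have e: "e c \<noteq> 0 \<and> (G ** W) *v e c = c *\<^sub>R e c" if "c \<in> ?E" for c
    using that someI_ex[of "\<lambda>v. v \<noteq> 0 \<and> (G ** W) *v v = c *\<^sub>R v"] unfolding e_def by simp
  have "inj_on e ?E"
  proof (rule inj_onI)
    fix a b assume a: "a \<in> ?E" and b: "b \<in> ?E" and "e a = e b"
    have "a *\<^sub>R e a = (G ** W) *v e a"
      using e[OF a] by simp
    also have "\<dots> = b *\<^sub>R e a"
      using e[OF b] \<open>e a = e b\<close> by simp
    finally show "a = b"
      using e[OF a] by simp
  qed
  moreover have "independent (e ` ?E)"
    unfolding independent_explicit_finite_subsets
  proof (intro allI impI ballI)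
    fix T u v
    assume T: "T \<subseteq> e ` ?E" "finite T" and sum_T: "(\<Sum>w\<in>T. u w *\<^sub>R w) = 0" and "v \<in> T"
    obtain b where b: "b \<in> ?E" "v = e b"
      using T \<open>v \<in> T\<close> by blast
    have orth: "w \<bullet> (W *v v) = 0" if w: "w \<in> T - {v}" for w
    proof -
      obtain a where a: "a \<in> ?E" "w = e a"
        using T w by blast
      with b w have "a \<noteq> b"
        by blast
      with a b e show ?thesis
        by (simp add: eigenvectors_mult_orthogonal[OF symW symG])
    qed
    have "0 = (\<Sum>w\<in>T. u w *\<^sub>R w) \<bullet> (W *v v)"
      using sum_T by simp
    also have "\<dots> = u v * (v \<bullet> (W *v v)) + (\<Sum>w\<in>T - {v}. u w * (w \<bullet> (W *v v)))"
      by (simp add: inner_add_left inner_sum_left sum.remove[OF T(2) \<open>v \<in> T\<close>])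
    also have "\<dots> = u v * (v \<bullet> (W *v v))"
      using orth by simp
    moreover have "0 < v \<bullet> (W *v v)"
      using pd e b by simp
    ultimately show "u v = 0"
      by simp
  qed
  then have "finite (e ` ?E)"
    using independent_bound by blast
  ultimately show ?thesis
    using finite_imageD by blast
qed

text \<open>\<mu> is the minimum of the generalized Rayleigh quotient (x \<bullet> K x) / (x \<bullet> W x),
  attained at v.\<close>

lemma generalized_rayleigh_min:
  fixes K W :: "real^'n^'n"
  assumes symK: "transpose K = K" and W: "sym_pos_def W"
  obtains \<mu> v where "v \<noteq> 0" "psd_matrix (K - \<mu> *\<^sub>R W)" "v \<bullet> ((K - \<mu> *\<^sub>R W) *v v) = 0"
proof -
  have symW: "transpose W = W" and pd: "\<And>x. x \<noteq> 0 \<Longrightarrow> 0 < x \<bullet> (W *v x)"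
    using W by (simp_all add: sym_pos_def_def)
  define f where "f x = (x \<bullet> (K *v x)) / (x \<bullet> (W *v x))" for x
  have "x \<bullet> (W *v x) \<noteq> 0" if "x \<in> sphere 0 1" for x
    using pd[of x] that by (cases "x = 0") auto
  then have "continuous_on (sphere 0 1) f"
    unfolding f_def
    by (intro continuous_intros
        continuous_on_subset[OF linear_continuous_on[OF matrix_vector_mul_bounded_linear]]) auto
  then obtain v where v: "v \<in> sphere 0 1" and v_min: "\<And>y. y \<in> sphere 0 1 \<Longrightarrow> f v \<le> f y"
    using continuous_attains_inf[OF compact_sphere, of 0 1 f] by auto
  define \<mu> where "\<mu> = f v"
  have "\<mu> * (x \<bullet> (W *v x)) \<le> x \<bullet> (K *v x)" for x
  proof (cases "x = 0")
    case False
    have "\<mu> \<le> f ((1 / norm x) *\<^sub>R x)"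
      using False v_min by (simp add: \<mu>_def)
    also have "\<dots> = f x"
      using False by (simp add: f_def matrix_vector_mult_scaleR)
    finally show ?thesis
      using pd[OF False] by (simp add: f_def pos_le_divide_eq)
  qed simp
  then have "psd_matrix (K - \<mu> *\<^sub>R W)"
    by (simp add: psd_matrix_def transpose_diff transpose_scalar symK symW
        matrix_vector_mult_diff_rdistrib inner_diff_right flip: scaleR_matrix_vector_assoc)
  moreover have "v \<bullet> ((K - \<mu> *\<^sub>R W) *v v) = 0"
    using pd[of v] v
    by (cases "v = 0") (auto simp: \<mu>_def f_def matrix_vector_mult_diff_rdistrib inner_diff_right
        simp flip: scaleR_matrix_vector_assoc)
  moreover have "v \<noteq> 0"
    using v by auto
  ultimately show thesis
    using that by blast
qed

lemma lambda_min_le_generalized_rayleigh: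
  fixes G W :: "real^'n^'n"
  assumes W: "sym_pos_def W" and symG: "transpose G = G"
  obtains \<mu> where "lambda_min (G ** W) \<le> \<mu>" "psd_matrix (W ** G ** W - \<mu> *\<^sub>R W)"
proof -
  have symW: "transpose W = W"
    using W by (simp add: sym_pos_def_def)
  have Wi_W: "matrix_inv W *v (W *v x) = x" for x
    using sym_pos_def_matrix_inv[OF W] by (simp add: matrix_vector_mul_assoc)
  define K where "K = W ** G ** W"
  have "transpose K = K"
    by (simp add: K_def matrix_transpose_mul symW symG matrix_mul_assoc)
  then obtain \<mu> v where "v \<noteq> 0" and psd: "psd_matrix (K - \<mu> *\<^sub>R W)"
    and "v \<bullet> ((K - \<mu> *\<^sub>R W) *v v) = 0"
    using generalized_rayleigh_min W by blast
  then have "(K - \<mu> *\<^sub>R W) *v v = 0"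
    by (intro psd_matrix_quadratic_form_eq_0)
  then have "W *v (G *v (W *v v)) = \<mu> *\<^sub>R (W *v v)"
    by (simp add: K_def matrix_vector_mult_diff_rdistrib
        flip: matrix_vector_mul_assoc scaleR_matrix_vector_assoc)
  then have "matrix_inv W *v (W *v (G *v (W *v v))) = matrix_inv W *v (\<mu> *\<^sub>R (W *v v))"
    by simp
  then have "(G ** W) *v v = \<mu> *\<^sub>R v"
    by (simp add: Wi_W matrix_vector_mult_scaleR flip: matrix_vector_mul_assoc)
  then have "lambda_min (G ** W) \<le> \<mu>"
    unfolding lambda_min_def using finite_eigenvalues_mult_pos_def[OF W symG] \<open>v \<noteq> 0\<close>
    by (auto intro: Min_le)
  with psd show thesis
    using that unfolding K_def by blast
qed

lemma lambda_min_mult_le: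
  fixes G W :: "real^'n^'n"
  assumes W: "sym_pos_def W" and symG: "transpose G = G"
  shows "lambda_min (G ** W) * (m \<bullet> (matrix_inv W *v m)) \<le> m \<bullet> (G *v m)"
proof -
  obtain \<mu> where "lambda_min (G ** W) \<le> \<mu>" and psd: "psd_matrix (W ** G ** W - \<mu> *\<^sub>R W)"
    using lambda_min_le_generalized_rayleigh[OF assms] .
  have symW: "transpose W = W" and W_psd: "psd_matrix W"
    using W sym_pos_def_imp_psd_matrix by (auto simp: sym_pos_def_def)
  have Wi_W: "matrix_inv W *v (W *v x) = x" and W_Wi: "W *v (matrix_inv W *v x) = x" for x
    using sym_pos_def_matrix_inv[OF W] by (simp_all add: matrix_vector_mul_assoc)
  define v where "v = matrix_inv W *v m"
  have m: "m = W *v v"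
    by (simp add: v_def W_Wi)
  have "0 \<le> v \<bullet> (W *v v)" and "\<mu> * (v \<bullet> (W *v v)) \<le> v \<bullet> ((W ** G ** W) *v v)"
    using W_psd psd
    by (auto simp: psd_matrix_def matrix_vector_mult_diff_rdistrib inner_diff_right
        simp flip: scaleR_matrix_vector_assoc)
  moreover have "lambda_min (G ** W) * (v \<bullet> (W *v v)) \<le> \<mu> * (v \<bullet> (W *v v))"
    using \<open>0 \<le> v \<bullet> (W *v v)\<close> \<open>lambda_min (G ** W) \<le> \<mu>\<close> by (rule mult_right_mono[rotated])
  moreover have eq1: "m \<bullet> (matrix_inv W *v m) = v \<bullet> (W *v v)"
    unfolding m Wi_W by (rule inner_commute)
  moreover have eq2: "m \<bullet> (G *v m) = v \<bullet> ((W ** G ** W) *v v)"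
    unfolding m
    by (simp add: symmetric_matrix_inner[OF symW] matrix_vector_mul_assoc) (simp add: matrix_mul_assoc)
  ultimately show ?thesis
    unfolding eq1 eq2 by linarith
qed

lemma lambda_min_mult_wnormsq_le:
  fixes G W :: "real^'n^'n" and M :: "real^'n^'d"
  assumes "sym_pos_def W" and "transpose G = G"
  shows "lambda_min (G ** W) * wnormsq (matrix_inv W) M \<le> wnormsq G M"
  unfolding wnormsq_eq_sum_rows sum_distrib_left
  by (rule sum_mono) (rule lambda_min_mult_le[OF assms])

section \<open>Expectations\<close>

lemma integrable_Hmat:
  fixes W :: "real^'n^'n" and D :: "(real^'t^'n) measure"
  assumes W: "sym_pos_def W" and "finite_measure D" and "Hmat W \<in> borel_measurable D"
  shows "integrable D (Hmat W)"
proof -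
  interpret finite_measure D by fact
  have bound: "norm (Hmat W S) \<le> CARD('n)\<^sup>2 * trace (matrix_inv W)" for S :: "real^'t^'n"
  proof -
    interpret weighted_projection W "matrix_inv W" "Hmat W S"
      using W by (rule weighted_projection_Hmat)
    note psd = psd_matrix_projection_weight[OF sym_pos_def_imp_psd_matrix[OF W]]
    have "trace (Hmat W S) \<le> trace (matrix_inv W)"
      using psd_matrix_trace_nonneg[OF psd(2)] by (simp add: trace_sub)
    then have "CARD('n)\<^sup>2 * trace (Hmat W S) \<le> CARD('n)\<^sup>2 * trace (matrix_inv W)"
      by (rule mult_left_mono) simp
    with norm_psd_matrix_le_trace[OF psd(1)] show ?thesis
      by linarith
  qed
  show ?thesis
    by (rule integrable_const_bound[where B = "CARD('n)\<^sup>2 * trace (matrix_inv W)"])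
      (use bound assms(3) in auto)
qed

lemma integral_Hmat_symmetric:
  assumes "sym_pos_def W" and "integrable D (Hmat W)"
  shows "transpose (\<integral>S. Hmat W S \<partial>D) = (\<integral>S. Hmat W S \<partial>D)"
  unfolding integral_bounded_linear[OF bounded_linear_transpose assms(2), symmetric]
  by (simp add: weighted_projection.symmetric_H[OF weighted_projection_Hmat[OF assms(1)]])

lemma integral_wnormsq_Hmat:
  "integrable D (Hmat W) \<Longrightarrow> (\<integral>S. wnormsq (Hmat W S) X \<partial>D) = wnormsq (\<integral>S. Hmat W S \<partial>D) X"
  by (rule integral_bounded_linear[OF bounded_linear_wnormsq_weight])

lemma kappa_eq_lambda_min:
  "integrable D (Hmat W) \<Longrightarrow> kappa W D = lambda_min ((\<integral>S. Hmat W S \<partial>D) ** W)"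
  unfolding kappa_def Pimat_eq_Hmat_mult
  by (simp add: integral_bounded_linear[OF bounded_linear_matrix_mult_right])

theorem lemma3p8:
  fixes W :: "real^'n^'n" and D :: "(real^'t^'n) measure" and M N :: "real^'n^'d"
  assumes "sym_pos_def W"
    and "prob_space D"
    and "sets D = sets borel"
    and "(\<lambda>S. Hmat W S) \<in> borel_measurable D"
  shows "(\<forall>S::real^'t^'n. wnormsq (matrix_inv W) (M ** (mat 1 - Pimat W S) + N ** Pimat W S)
            = wnormsq (matrix_inv W) (M ** (mat 1 - Pimat W S))
              + wnormsq (matrix_inv W) (N ** Pimat W S))
    \<and> (\<integral>S. wnormsq (matrix_inv W) (N ** Pimat W S) \<partial>D) = wnormsq (\<integral>S. Hmat W S \<partial>D) N
    \<and> (\<integral>S. wnormsq (matrix_inv W) (M ** (mat 1 - Pimat W S) + N ** Pimat W S) \<partial>D)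
        \<le> (1 - kappa W D) * wnormsq (matrix_inv W) M + wnormsq (\<integral>S. Hmat W S \<partial>D) N"
proof -
  interpret prob_space D by fact
  define G where "G = (\<integral>S. Hmat W S \<partial>D)"
  have int_H: "integrable D (Hmat W)"
    using integrable_Hmat[OF assms(1) finite_measure_axioms] assms(4) by simp
  have int_wnormsq: "integrable D (\<lambda>S. wnormsq (Hmat W S) X)" for X :: "real^'n^'d"
    by (rule integrable_bounded_linear[OF bounded_linear_wnormsq_weight int_H])
  have E_wnormsq: "(\<integral>S. wnormsq (Hmat W S) X \<partial>D) = wnormsq G X" for X :: "real^'n^'d"
    unfolding G_def by (rule integral_wnormsq_Hmat[OF int_H])
  have E_projection: "(\<integral>S. wnormsq (matrix_inv W) (N ** Pimat W S) \<partial>D) = wnormsq G N"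
    by (simp add: wnormsq_Pimat[OF assms(1)] E_wnormsq)
  have "(\<integral>S. wnormsq (matrix_inv W) (M ** (mat 1 - Pimat W S) + N ** Pimat W S) \<partial>D)
      = (\<integral>S. wnormsq (matrix_inv W) M - wnormsq (Hmat W S) M + wnormsq (Hmat W S) N \<partial>D)"
    by (simp add: wnormsq_Pimat_pythagoras wnormsq_Pimat wnormsq_complement_Pimat assms(1))
  also have "\<dots> = wnormsq (matrix_inv W) M - wnormsq G M + wnormsq G N"
    using int_wnormsq by (simp add: E_wnormsq prob_space)
  also have "\<dots> \<le> (1 - kappa W D) * wnormsq (matrix_inv W) M + wnormsq G N"
    using lambda_min_mult_wnormsq_le[OF assms(1) integral_Hmat_symmetric[OF assms(1) int_H]]
    by (simp add: kappa_eq_lambda_min[OF int_H] G_def left_diff_distrib)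
  finally show ?thesis
    using wnormsq_Pimat_pythagoras[OF assms(1)] E_projection unfolding G_def by blast
qed

end
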